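(* Let $n\ge3$. For any real $3$-dimensional subspace $W\subset\mathbb{C}^n$, the orbit $\mathrm{SU}(n)\cdot W$ has the transitivity property. Consequently, for $p\ge3$, any nonempty compact $\mathrm{U}(n)$-invariant subset $\mathbb{G}\subset G^{\mathbb{R}}(p,\mathbb{C}^n)$ has the transitivity property.
   Context: $G^{\mathbb{R}}(p,\mathbb{C}^n)$ is the Grassmannian of real $p$-dimensional subspaces of $\mathbb{C}^n=\mathbb{R}^{2n}$. A set $\mathbb{G}$ of real planes in $\mathbb{R}^{2n}$ has the transitivity property if for any two vectors $x,y$ there exist $W_1,\dots,W_k\in\mathbb{G}$ with $x\in W_1$, $y\in W_k$ and $\dim_{\mathbb{R}}(W_i\cap W_{i+1})>0$ for $i=1,\dots,k-1$. *)

theory Defs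
  imports "HOL-Analysis.Analysis"
begin

text \<open>C^n is modelled as complex^'n with CARD('n) = n, regarded as the real
 Euclidean space R^(2n) (real inner product = real part of Hermitian product).
 subspace and dim are the real notions.\<close>

definition conj_transpose :: "complex^'n^'m \<Rightarrow> complex^'m^'n" where
  "conj_transpose A = (\<chi> i j. cnj (A $ j $ i))"

definition unitary_group :: "(complex^'n^'n) set" where
  "unitary_group = {U. U ** conj_transpose U = mat 1 \<and> conj_transpose U ** U = mat 1}"

definition special_unitary_group :: "(complex^'n^'n) set" where
  "special_unitary_group = {U \<in> unitary_group. det U = 1}"

definition act :: "complex^'n^'n \<Rightarrow> (complex^'n) set \<Rightarrow> (complex^'n) set" where
  "act U W = (\<lambda>x. U *v x) ` W"

definition orbit :: "(complex^'n^'n) set \<Rightarrow> (complex^'n) set \<Rightarrow> (complex^'n) set set" where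
  "orbit H W = {act U W | U. U \<in> H}"

definition real_grassmannian :: "nat \<Rightarrow> (complex^'n) set set" where
  "real_grassmannian p = {W. subspace W \<and> dim W = p}"

text \<open>Standard topology on the Grassmannian: W is identified with its orthogonal
 projection (closest-point map), which as a real-linear map is encoded by its
 values on the real basis e_k, i e_k.\<close>
definition proj_coords :: "(complex^'n) set \<Rightarrow> (complex^'n^'n) \<times> (complex^'n^'n)" where
  "proj_coords W = ((\<chi> k. closest_point W (axis k 1)), (\<chi> k. closest_point W (axis k \<i>)))"

definition grassmannian_compact :: "(complex^'n) set set \<Rightarrow> bool" where
  "grassmannian_compact G \<longleftrightarrow> compact (proj_coords ` G)"

definition U_invariant :: "(complex^'n) set set \<Rightarrow> bool" where
  "U_invariant G \<longleftrightarrow> (\<forall>U \<in> unitary_group. \<forall>W \<in> G. act U W \<in> G)"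

definition transitivity_property :: "(complex^'n) set set \<Rightarrow> bool" where
  "transitivity_property G \<longleftrightarrow>
     (\<forall>x y. \<exists>Ws. Ws \<noteq> [] \<and> set Ws \<subseteq> G \<and> x \<in> hd Ws \<and> y \<in> last Ws \<and>
        (\<forall>i. Suc i < length Ws \<longrightarrow> dim (Ws ! i \<inter> Ws ! Suc i) > 0))"

end

theory Submission
  imports Defs
begin

text \<open>A real subspace \<open>W\<close> of dimension \<open>\<ge> 3\<close> contains a Hermitian orthonormal pair
  \<open>w\<^sub>1, w\<^sub>2\<close>. Given \<open>x, y\<close>, pick a unit vector \<open>z\<close> Hermitian-orthogonal to both; it exists since
  \<open>x, ix, y, iy\<close> span at most 4 of the \<open>2n \<ge> 6\<close> real dimensions. As \<open>SU(n)\<close>, \<open>n \<ge> 3\<close>, acts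
  transitively on Hermitian orthonormal pairs, there are \<open>U\<^sub>1, U\<^sub>2\<close> with \<open>U\<^sub>1 w\<^sub>1 \<parallel> x\<close>,
  \<open>U\<^sub>2 w\<^sub>1 \<parallel> y\<close> and \<open>U\<^sub>1 w\<^sub>2 = U\<^sub>2 w\<^sub>2 = z\<close>, so the chain \<open>U\<^sub>1 W, U\<^sub>2 W\<close> links \<open>x\<close> to \<open>y\<close>.
  A \<open>U(n)\<close>-invariant family of real subspaces of dimension \<open>\<ge> 3\<close> contains such an orbit.\<close>

definition cinner :: "complex^'n \<Rightarrow> complex^'n \<Rightarrow> complex" where
  "cinner x y = (\<Sum>i\<in>UNIV. cnj (x$i) * y$i)"

lemma cinner_add_left: "cinner (x + y) z = cinner x z + cinner y z"
  by (simp add: cinner_def sum.distrib algebra_simps)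

lemma cinner_add_right: "cinner z (x + y) = cinner z x + cinner z y"
  by (simp add: cinner_def sum.distrib algebra_simps)

lemma cinner_diff_left: "cinner (x - y) z = cinner x z - cinner y z"
  by (simp add: cinner_def sum_subtractf algebra_simps)

lemma cinner_diff_right: "cinner z (x - y) = cinner z x - cinner z y"
  by (simp add: cinner_def sum_subtractf algebra_simps)

lemma cinner_scale_left: "cinner (c *s x) y = cnj c * cinner x y"
  by (simp add: cinner_def sum_distrib_left algebra_simps)

lemma cinner_scale_right: "cinner x (c *s y) = c * cinner x y"
  by (simp add: cinner_def sum_distrib_left algebra_simps)

lemma cinner_scaleR_left: "cinner (r *\<^sub>R x) y = of_real r * cinner x y"
  unfolding cinner_def vector_scaleR_component
  by (simp add: sum_distrib_left algebra_simps scaleR_conv_of_real)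

lemma cinner_scaleR_right: "cinner x (r *\<^sub>R y) = of_real r * cinner x y"
  unfolding cinner_def vector_scaleR_component
  by (simp add: sum_distrib_left algebra_simps scaleR_conv_of_real)

lemma cinner_commute: "cinner y x = cnj (cinner x y)"
  by (simp add: cinner_def mult.commute)

lemma cinner_self: "cinner x x = of_real ((norm x)\<^sup>2)"
proof -
  have "cinner x x = (\<Sum>i\<in>UNIV. of_real ((cmod (x$i))\<^sup>2))"
    by (simp add: cinner_def complex_norm_square[symmetric] mult.commute)
  also have "\<dots> = of_real ((norm x)\<^sup>2)"
    by (simp add: norm_vec_def L2_set_def sum_nonneg)
  finally show ?thesis .
qed

lemma cinner_eq_0_iff: "cinner x y = 0 \<longleftrightarrow> inner x y = 0 \<and> inner (\<i> *s x) y = 0"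
proof -
  have "Re (cinner x y) = inner x y" "Im (cinner x y) = inner (\<i> *s x) y"
    by (simp_all add: cinner_def inner_vec_def Re_sum Im_sum inner_complex_def)
  then show ?thesis by (metis complex_eq_iff zero_complex.simps)
qed

lemma cinner_axis_left: "cinner (axis k 1) v = v $ k"
proof -
  have "cinner (axis k 1) v = (\<Sum>i\<in>UNIV. if i = k then v$i else 0)"
    unfolding cinner_def by (rule sum.cong) (auto simp: axis_def)
  then show ?thesis by simp
qed

lemma cinner_adjoint: "cinner (A *v x) y = cinner x (conj_transpose A *v y)"
proof -
  have "cinner (A *v x) y = (\<Sum>i\<in>UNIV. \<Sum>j\<in>UNIV. cnj (A$i$j) * cnj (x$j) * y$i)"
    unfolding cinner_def matrix_vector_mult_def by (simp add: sum_distrib_right)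
  also have "\<dots> = (\<Sum>j\<in>UNIV. \<Sum>i\<in>UNIV. cnj (A$i$j) * cnj (x$j) * y$i)"
    by (rule sum.swap)
  also have "\<dots> = cinner x (conj_transpose A *v y)"
    unfolding cinner_def matrix_vector_mult_def conj_transpose_def
    by (simp add: sum_distrib_left mult_ac)
  finally show ?thesis .
qed

lemma matrix_vector_mult_scaleR: "A *v (r *\<^sub>R v) = r *\<^sub>R (A *v (v::complex^'n))"
  unfolding matrix_vector_mult_def by (simp add: vec_eq_iff scaleR_sum_right)

lemma det_conj_transpose: "det (conj_transpose A) = cnj (det (A::complex^'n^'n))"
proof -
  have "conj_transpose A = transpose (\<chi> i j. cnj (A$i$j))"
    by (simp add: conj_transpose_def transpose_def vec_eq_iff)
  then have "det (conj_transpose A) = det (\<chi> i j. cnj (A$i$j))" by simp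
  also have "\<dots> = cnj (det A)" by (simp add: det_def)
  finally show ?thesis .
qed

lemma matrix_vector_mult_axis: "(A *v axis j 1) $ i = A $ i $ j"
proof -
  have "(A *v axis j 1) $ i = (\<Sum>k\<in>UNIV. if k = j then A$i$k else 0)"
    unfolding matrix_vector_mult_def by (simp add: axis_def if_distrib cong: if_cong)
  then show ?thesis by simp
qed

lemma unitaryI:
  fixes A :: "complex^'n^'n"
  assumes "\<And>x y. cinner (A *v x) (A *v y) = cinner x y"
  shows "A \<in> unitary_group"
proof -
  have "(conj_transpose A ** A) $ j $ k = cinner (A *v axis j 1) (A *v axis k 1)" for j k
    unfolding cinner_def matrix_vector_mult_axis
    by (simp add: matrix_matrix_mult_def conj_transpose_def)
  moreover have "cinner (A *v axis j 1) (A *v axis k 1) = (if j = k then 1 else 0)" for j k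
    by (simp only: assms cinner_axis_left) (simp add: axis_def)
  ultimately have left: "conj_transpose A ** A = mat 1"
    by (simp add: vec_eq_iff mat_def)
  then have "A ** conj_transpose A = mat 1"
    using matrix_left_right_inverse by blast
  with left show ?thesis by (simp add: unitary_group_def)
qed

lemma unitary_cinner:
  "A \<in> unitary_group \<Longrightarrow> cinner (A *v x) (A *v y) = cinner x y"
  by (simp add: cinner_adjoint matrix_vector_mul_assoc unitary_group_def)

lemma unitary_mult:
  "A \<in> unitary_group \<Longrightarrow> B \<in> unitary_group \<Longrightarrow> A ** B \<in> unitary_group"
  by (rule unitaryI) (simp add: matrix_vector_mul_assoc[symmetric] unitary_cinner)

lemma unitary_det: "A \<in> unitary_group \<Longrightarrow> cnj (det A) * det A = 1"
  unfolding unitary_group_def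
  by (metis (mono_tags) det_I det_conj_transpose det_mul mem_Collect_eq)

definition rank_one_update :: "complex \<Rightarrow> complex^'n \<Rightarrow> complex^'n^'n" where
  "rank_one_update a u = (\<chi> i j. (if i = j then 1 else 0) + a * u$i * cnj (u$j))"

lemma rank_one_update_apply: "rank_one_update a u *v x = x + (a * cinner u x) *s u"
proof -
  have "(rank_one_update a u *v x) $ i = x $ i + a * cinner u x * u $ i" for i
  proof -
    have "(rank_one_update a u *v x) $ i
        = (\<Sum>j\<in>UNIV. (if i = j then x$j else 0) + a * u$i * (cnj (u$j) * x$j))"
      unfolding rank_one_update_def matrix_vector_mult_def vec_lambda_beta
      by (rule sum.cong) (auto simp: algebra_simps)
    also have "\<dots> = x$i + a * u$i * cinner u x"
      by (simp add: sum.distrib cinner_def sum_distrib_left)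
    finally show ?thesis by (simp add: mult_ac)
  qed
  then show ?thesis by (simp add: vec_eq_iff)
qed

lemma rank_one_update_fixes: "cinner u z = 0 \<Longrightarrow> rank_one_update a u *v z = z"
  by (simp add: rank_one_update_apply)

lemma rank_one_update_unitary:
  fixes u :: "complex^'n"
  assumes "a + cnj a + a * cnj a * cinner u u = 0"
  shows "rank_one_update a u \<in> unitary_group"
proof (rule unitaryI)
  fix x y :: "complex^'n"
  have "cinner (rank_one_update a u *v x) (rank_one_update a u *v y)
      = cinner x y + cnj (cinner u x) * cinner u y * (a + cnj a + a * cnj a * cinner u u)"
    by (simp add: rank_one_update_apply cinner_add_left cinner_add_right cinner_scale_left
        cinner_scale_right cinner_commute[of x u] algebra_simps)
  with assms show "cinner (rank_one_update a u *v x) (rank_one_update a u *v y) = cinner x y"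
    by simp
qed

text \<open>A Householder reflection in \<open>p - q\<close>.\<close>

lemma unitary_reflection_exists:
  fixes p q :: "complex^'n"
  assumes norms: "cinner p p = cinner q q" and real: "cnj (cinner q p) = cinner q p"
  obtains H where "H \<in> unitary_group" "H *v p = q"
    "\<And>z. cinner p z = 0 \<Longrightarrow> cinner q z = 0 \<Longrightarrow> H *v z = z"
proof (cases "p = q")
  case True
  then show ?thesis by (intro that[of "mat 1"]) (simp_all add: unitaryI)
next
  case False
  define u where "u = p - q"
  define s where "s = cinner u u"
  have s_real: "cnj s = s" by (simp add: s_def cinner_self)
  have "s \<noteq> 0" using False by (simp add: s_def u_def cinner_self)
  have s_eq: "s = 2 * cinner u p"
    using norms real
    by (simp add: s_def u_def cinner_diff_left cinner_diff_right cinner_commute[of p q])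
  let ?H = "rank_one_update (-2 / s) u"
  show ?thesis
  proof (rule that[of ?H])
    show "?H \<in> unitary_group"
      by (rule rank_one_update_unitary)
        (use \<open>s \<noteq> 0\<close> in \<open>simp add: s_real s_def[symmetric] field_simps\<close>)
    have "(-2 / s) * cinner u p = -1" using \<open>s \<noteq> 0\<close> s_eq by (simp add: field_simps)
    then show "?H *v p = q" by (simp add: rank_one_update_apply u_def)
    fix z assume "cinner p z = 0" "cinner q z = 0"
    then show "?H *v z = z" by (simp add: rank_one_update_fixes u_def cinner_diff_left)
  qed
qed

lemma unitary_map_unit_vector:
  fixes p q :: "complex^'n"
  assumes p: "cinner p p = 1" and q: "cinner q q = 1"
  obtains V where "V \<in> unitary_group" "V *v p = q"
    "\<And>z. cinner p z = 0 \<Longrightarrow> cinner q z = 0 \<Longrightarrow> V *v z = z"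
proof -
  define t where "t = cinner q p"
  \<comment> \<open>First multiply \<open>p\<close> by a phase \<open>c\<close> making \<open>cinner q (c *s p)\<close> real; then reflect.\<close>
  obtain c where c: "cnj c * c = 1" "cnj (c * t) = c * t"
  proof (cases "t = 0")
    case False
    have "t * cnj t = of_real (cmod t) * of_real (cmod t)"
      using complex_norm_square[of t] by (simp add: power2_eq_square)
    with False show ?thesis
      by (intro that[of "cnj t / of_real (cmod t)"]) (simp_all add: field_simps mult.commute)
  qed (rule that[of 1]; simp)
  define P where "P = rank_one_update (c - 1) p"
  have "(c - 1) + cnj (c - 1) + (c - 1) * cnj (c - 1) * cinner p p = cnj c * c - 1"
    by (simp add: p algebra_simps)
  then have "P \<in> unitary_group" unfolding P_def
    by (intro rank_one_update_unitary) (simp add: c(1))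
  have Pp: "P *v p = c *s p"
    by (simp add: P_def rank_one_update_apply p vector_sadd_rdistrib[symmetric])
  have "cinner (c *s p) (c *s p) = cinner q q"
    using c(1) by (simp add: cinner_scale_left cinner_scale_right p q mult.commute)
  moreover have "cnj (cinner q (c *s p)) = cinner q (c *s p)"
    using c(2) by (simp add: cinner_scale_right t_def)
  ultimately obtain H where H: "H \<in> unitary_group" "H *v (c *s p) = q"
    "\<And>z. cinner (c *s p) z = 0 \<Longrightarrow> cinner q z = 0 \<Longrightarrow> H *v z = z"
    by (rule unitary_reflection_exists) blast
  show ?thesis
  proof (rule that[of "H ** P"])
    show "H ** P \<in> unitary_group" by (rule unitary_mult[OF H(1) \<open>P \<in> unitary_group\<close>])
    show "(H ** P) *v p = q" by (simp add: matrix_vector_mul_assoc[symmetric] Pp H(2))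
    fix z assume "cinner p z = 0" "cinner q z = 0"
    then show "(H ** P) *v z = z"
      by (simp add: matrix_vector_mul_assoc[symmetric] P_def rank_one_update_fixes H(3)
          cinner_scale_left)
  qed
qed

lemma det_rank_one_update_unit:
  fixes e :: "complex^'n"
  assumes e: "cinner e e = 1"
  shows "det (rank_one_update a e) = 1 + a"
proof -
  obtain k :: 'n where True by blast
  have "cinner (axis k 1) (axis k (1::complex)) = 1" by (simp add: cinner_axis_left)
  then obtain R where R: "R \<in> unitary_group" "R *v axis k 1 = e"
    using unitary_map_unit_vector[OF _ e] by blast
  have RR: "R *v (conj_transpose R *v x) = x" for x
    using R(1) by (simp add: unitary_group_def matrix_vector_mul_assoc)
  have "R *v (rank_one_update a (axis k 1) *v (conj_transpose R *v x)) = rank_one_update a e *v x"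
    for x
    by (simp add: rank_one_update_apply matrix_vector_right_distrib vector_scalar_commute RR R(2)
        cinner_adjoint[symmetric])
  then have conj: "R ** rank_one_update a (axis k 1) ** conj_transpose R = rank_one_update a e"
    by (simp add: matrix_eq matrix_vector_mul_assoc[symmetric])
  have "det (rank_one_update a (axis k 1)) = (\<Prod>i\<in>UNIV. rank_one_update a (axis k 1) $ i $ i)"
    by (rule det_diagonal) (auto simp: rank_one_update_def axis_def)
  also have "\<dots> = (\<Prod>i\<in>UNIV. if i = k then 1 + a else 1)"
    by (rule prod.cong) (simp_all add: rank_one_update_def axis_def)
  also have "\<dots> = 1 + a" by (simp add: prod.If_cases)
  finally have "det (rank_one_update a e) = (1 + a) * (cnj (det R) * det R)"
    by (simp add: conj[symmetric] det_mul det_conj_transpose)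
  with unitary_det[OF R(1)] show ?thesis by simp
qed

lemma cinner_orthogonal_unit_exists:
  fixes a b :: "complex^'n"
  assumes "CARD('n) \<ge> 3"
  obtains e where "cinner e e = 1" "cinner a e = 0" "cinner b e = 0"
proof -
  let ?S = "{a, \<i> *s a, b, \<i> *s b}"
  have "dim ?S \<le> card ?S" by (rule dim_le_card') simp
  also have "\<dots> \<le> 4" using card_length[of "[a, \<i> *s a, b, \<i> *s b]"] by simp
  also have "4 < DIM(complex^'n)" using assms by simp
  finally obtain x where x: "x \<noteq> 0" "\<And>y. y \<in> span ?S \<Longrightarrow> orthogonal x y"
    using orthogonal_to_subspace_exists by blast
  have "inner y x = 0" if "y \<in> ?S" for y
    using x(2)[OF span_base[OF that]] by (simp add: orthogonal_def inner_commute)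
  then have "cinner a x = 0" "cinner b x = 0" by (simp_all add: cinner_eq_0_iff)
  with x(1) show ?thesis
    by (intro that[of "(1 / norm x) *\<^sub>R x"]) (simp_all add: cinner_self cinner_scaleR_right)
qed

text \<open>The extra direction \<open>e\<close>, available since \<open>n \<ge> 3\<close>, absorbs the determinant.\<close>

lemma special_unitary_maps_orthonormal_pair:
  fixes w\<^sub>1 w\<^sub>2 a b :: "complex^'n"
  assumes n: "CARD('n) \<ge> 3"
    and w: "cinner w\<^sub>1 w\<^sub>1 = 1" "cinner w\<^sub>2 w\<^sub>2 = 1" "cinner w\<^sub>1 w\<^sub>2 = 0"
    and ab: "cinner a a = 1" "cinner b b = 1" "cinner a b = 0"
  obtains U where "U \<in> special_unitary_group" "U *v w\<^sub>1 = a" "U *v w\<^sub>2 = b"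
proof -
  obtain V\<^sub>1 where V\<^sub>1: "V\<^sub>1 \<in> unitary_group" "V\<^sub>1 *v w\<^sub>1 = a"
    using unitary_map_unit_vector[OF w(1) ab(1)] by blast
  define w where "w = V\<^sub>1 *v w\<^sub>2"
  have "cinner w w = 1" "cinner a w = 0"
    using unitary_cinner[OF V\<^sub>1(1)] V\<^sub>1(2) w by (metis w_def)+
  then obtain V\<^sub>2 where V\<^sub>2: "V\<^sub>2 \<in> unitary_group" "V\<^sub>2 *v w = b"
    "\<And>z. cinner w z = 0 \<Longrightarrow> cinner b z = 0 \<Longrightarrow> V\<^sub>2 *v z = z"
    using unitary_map_unit_vector[OF _ ab(2)] by blast
  have "V\<^sub>2 *v a = a"
    by (rule V\<^sub>2(3))
      (use \<open>cinner a w = 0\<close> ab(3) in \<open>simp_all add: cinner_commute[of w a] cinner_commute[of b a]\<close>)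
  define V where "V = V\<^sub>2 ** V\<^sub>1"
  have V: "V \<in> unitary_group" "V *v w\<^sub>1 = a" "V *v w\<^sub>2 = b"
    using unitary_mult[OF V\<^sub>2(1) V\<^sub>1(1)] \<open>V\<^sub>2 *v a = a\<close> V\<^sub>1(2) V\<^sub>2(2)
    by (simp_all add: V_def w_def matrix_vector_mul_assoc[symmetric])
  obtain e where e: "cinner e e = 1" "cinner a e = 0" "cinner b e = 0"
    using cinner_orthogonal_unit_exists[OF n] by blast
  define Q where "Q = rank_one_update (cnj (det V) - 1) e"
  have "Q \<in> unitary_group" unfolding Q_def
    by (rule rank_one_update_unitary)
      (use unitary_det[OF V(1)] in \<open>simp add: e algebra_simps\<close>)
  have "Q *v a = a" "Q *v b = b"
    using e
    by (simp_all add: Q_def rank_one_update_fixes cinner_commute[of e a] cinner_commute[of e b])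
  have "det (Q ** V) = 1"
    using unitary_det[OF V(1)] by (simp add: det_mul Q_def det_rank_one_update_unit[OF e(1)])
  with unitary_mult[OF \<open>Q \<in> unitary_group\<close> V(1)] show ?thesis
    by (intro that[of "Q ** V"])
      (simp_all add: special_unitary_group_def matrix_vector_mul_assoc[symmetric] V
        \<open>Q *v a = a\<close> \<open>Q *v b = b\<close>)
qed

lemma subspace_cinner_orthonormal_pair:
  fixes W :: "(complex^'n) set"
  assumes W: "subspace W" and "dim W \<ge> 3"
  obtains w\<^sub>1 w\<^sub>2 where "w\<^sub>1 \<in> W" "w\<^sub>2 \<in> W"
    "cinner w\<^sub>1 w\<^sub>1 = 1" "cinner w\<^sub>2 w\<^sub>2 = 1" "cinner w\<^sub>1 w\<^sub>2 = 0"
proof -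
  obtain B where B: "B \<subseteq> W" "pairwise orthogonal B" "\<And>x. x \<in> B \<Longrightarrow> norm x = 1"
    "card B = dim W"
    using orthonormal_basis_subspace[OF W] by metis
  then obtain T where "T \<subseteq> B" "card T = 3"
    using \<open>dim W \<ge> 3\<close> obtain_subset_with_card_n by metis
  then obtain u\<^sub>1 u\<^sub>2 u\<^sub>3 where u: "{u\<^sub>1, u\<^sub>2, u\<^sub>3} \<subseteq> B" "u\<^sub>1 \<noteq> u\<^sub>2" "u\<^sub>2 \<noteq> u\<^sub>3" "u\<^sub>1 \<noteq> u\<^sub>3"
    by (auto simp: card_3_iff)
  have o: "inner u\<^sub>1 u\<^sub>2 = 0" "inner u\<^sub>1 u\<^sub>3 = 0" "inner u\<^sub>2 u\<^sub>3 = 0"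
    using u B(2) by (auto simp: pairwise_def orthogonal_def)
  have "norm u\<^sub>1 = 1" "norm u\<^sub>2 = 1" "norm u\<^sub>3 = 1"
    using u(1) B(3) by auto
  then have n: "cinner u\<^sub>1 u\<^sub>1 = 1" "inner u\<^sub>2 u\<^sub>2 = 1" "inner u\<^sub>3 u\<^sub>3 = 1"
    by (simp_all add: cinner_self dot_square_norm)
  have uW: "u\<^sub>1 \<in> W" "u\<^sub>2 \<in> W" "u\<^sub>3 \<in> W"
    using u(1) B(1) by auto
  \<comment> \<open>Only the imaginary part of \<open>cinner u\<^sub>1 v\<close> has to vanish on \<open>span {u\<^sub>2, u\<^sub>3}\<close>:
    one real linear condition on a plane.\<close>
  define \<alpha> where "\<alpha> = inner (\<i> *s u\<^sub>1) u\<^sub>3"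
  define \<beta> where "\<beta> = - inner (\<i> *s u\<^sub>1) u\<^sub>2"
  show ?thesis
  proof (cases "\<alpha> = 0 \<and> \<beta> = 0")
    case True
    with o n show ?thesis
      by (intro that[OF uW(1,2)])
        (simp_all add: cinner_self cinner_eq_0_iff \<beta>_def power2_norm_eq_inner)
  next
    case False
    define v where "v = \<alpha> *\<^sub>R u\<^sub>2 + \<beta> *\<^sub>R u\<^sub>3"
    have "inner v u\<^sub>2 = \<alpha>" "inner v u\<^sub>3 = \<beta>"
      using n o by (simp_all add: v_def inner_add_left inner_commute[of u\<^sub>3 u\<^sub>2])
    with False have "v \<noteq> 0" by auto
    have "v \<in> W" unfolding v_def using W uW by (intro subspace_add subspace_scale) auto
    have "cinner u\<^sub>1 v = 0"
      unfolding cinner_eq_0_iff using o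
      by (simp add: v_def inner_add_right \<alpha>_def \<beta>_def algebra_simps)
    with \<open>v \<noteq> 0\<close> \<open>v \<in> W\<close> W show ?thesis
      by (intro that[OF uW(1) _ n(1), of "(1 / norm v) *\<^sub>R v"])
        (simp_all add: subspace_scale cinner_self cinner_scaleR_right)
  qed
qed

lemma special_unitary_image_contains_orthogonal_pair:
  fixes W :: "(complex^'n) set" and x z :: "complex^'n"
  assumes n: "CARD('n) \<ge> 3" and W: "subspace W" "dim W \<ge> 3"
    and z: "cinner z z = 1" "cinner x z = 0"
  obtains U where "U \<in> special_unitary_group" "x \<in> act U W" "z \<in> act U W"
proof -
  obtain w\<^sub>1 w\<^sub>2 where w: "w\<^sub>1 \<in> W" "w\<^sub>2 \<in> W"
    "cinner w\<^sub>1 w\<^sub>1 = 1" "cinner w\<^sub>2 w\<^sub>2 = 1" "cinner w\<^sub>1 w\<^sub>2 = 0"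
    using subspace_cinner_orthonormal_pair[OF W] by blast
  obtain x' where x': "cinner x' x' = 1" "cinner x' z = 0" "x = norm x *\<^sub>R x'"
  proof (cases "x = 0")
    case True
    obtain e where "cinner e e = 1" "cinner z e = 0"
      using cinner_orthogonal_unit_exists[OF n] by blast
    with True show ?thesis by (intro that[of e]) (simp_all add: cinner_commute[of e z])
  next
    case False
    with z(2) show ?thesis
      by (intro that[of "(1 / norm x) *\<^sub>R x"]) (simp_all add: cinner_self cinner_scaleR_left)
  qed
  obtain U where U: "U \<in> special_unitary_group" "U *v w\<^sub>1 = x'" "U *v w\<^sub>2 = z"
    using special_unitary_maps_orthonormal_pair[OF n w(3-5) x'(1) z(1) x'(2)] by blast
  have "x = U *v (norm x *\<^sub>R w\<^sub>1)" "norm x *\<^sub>R w\<^sub>1 \<in> W"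
    using U(2) x'(3) W(1) w(1) by (simp_all add: matrix_vector_mult_scaleR subspace_scale)
  with U(1,3) w(2) show ?thesis
    by (intro that[of U]) (auto simp: act_def)
qed

lemma transitivity_property_if_contains_special_unitary_orbit:
  fixes W :: "(complex^'n) set"
  assumes n: "CARD('n) \<ge> 3" and W: "subspace W" "dim W \<ge> 3"
    and G: "\<And>U. U \<in> special_unitary_group \<Longrightarrow> act U W \<in> G"
  shows "transitivity_property G"
  unfolding transitivity_property_def
proof (intro allI)
  fix x y :: "complex^'n"
  obtain z where z: "cinner z z = 1" "cinner x z = 0" "cinner y z = 0"
    using cinner_orthogonal_unit_exists[OF n] by blast
  obtain U\<^sub>1 where U\<^sub>1: "U\<^sub>1 \<in> special_unitary_group" "x \<in> act U\<^sub>1 W" "z \<in> act U\<^sub>1 W"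
    using special_unitary_image_contains_orthogonal_pair[OF n W z(1,2)] by blast
  obtain U\<^sub>2 where U\<^sub>2: "U\<^sub>2 \<in> special_unitary_group" "y \<in> act U\<^sub>2 W" "z \<in> act U\<^sub>2 W"
    using special_unitary_image_contains_orthogonal_pair[OF n W z(1,3)] by blast
  have "z \<noteq> 0" using z(1) by (auto simp: cinner_def)
  moreover have "z \<in> act U\<^sub>1 W \<inter> act U\<^sub>2 W" using U\<^sub>1(3) U\<^sub>2(3) by blast
  ultimately have "dim (act U\<^sub>1 W \<inter> act U\<^sub>2 W) > 0"
    by (metis dim_eq_0 gr0I singletonD subsetD)
  with G[OF U\<^sub>1(1)] G[OF U\<^sub>2(1)] U\<^sub>1(2) U\<^sub>2(2)
  show "\<exists>Ws. Ws \<noteq> [] \<and> set Ws \<subseteq> G \<and> x \<in> hd Ws \<and> y \<in> last Ws \<and>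
      (\<forall>i. Suc i < length Ws \<longrightarrow> dim (Ws ! i \<inter> Ws ! Suc i) > 0)"
    by (intro exI[of _ "[act U\<^sub>1 W, act U\<^sub>2 W]"]) (auto simp: less_Suc_eq)
qed

theorem corollary11p5:
  assumes "CARD('n::finite) \<ge> 3"
  shows "(\<forall>W :: (complex^'n) set. subspace W \<and> dim W = 3 \<longrightarrow>
            transitivity_property (orbit special_unitary_group W))
       \<and> (\<forall>p (G :: (complex^'n) set set). p \<ge> 3 \<and> G \<subseteq> real_grassmannian p \<and> G \<noteq> {}
            \<and> grassmannian_compact G \<and> U_invariant G \<longrightarrow> transitivity_property G)"
proof (intro conjI allI impI)
  fix W :: "(complex^'n) set"
  assume "subspace W \<and> dim W = 3"
  then show "transitivity_property (orbit special_unitary_group W)"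
    by (intro transitivity_property_if_contains_special_unitary_orbit[OF assms])
      (auto simp: orbit_def)
next
  fix p and G :: "(complex^'n) set set"
  assume G: "p \<ge> 3 \<and> G \<subseteq> real_grassmannian p \<and> G \<noteq> {}
    \<and> grassmannian_compact G \<and> U_invariant G"
  then obtain W where "W \<in> G" by blast
  with G have "subspace W" "dim W \<ge> 3" by (auto simp: real_grassmannian_def)
  then show "transitivity_property G"
  proof (rule transitivity_property_if_contains_special_unitary_orbit[OF assms])
    fix U :: "complex^'n^'n"
    assume "U \<in> special_unitary_group"
    with G \<open>W \<in> G\<close> show "act U W \<in> G"
      by (auto simp: U_invariant_def special_unitary_group_def)
  qed
qed

end
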